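(* Let $d,n\ge 1$ and let $\mathbf{X},\mathbf{X}'\in\mathbb{R}^{d\times n}$ be neighboring datasets all of whose columns lie in $\mathcal{B}_d$. Let $\mathbf{\Lambda}=\mathrm{diag}(\lambda_1,\dots,\lambda_d)$ and $\mathbf{\Lambda}'=\mathrm{diag}(\lambda_1',\dots,\lambda_d')$ be the diagonal matrices of eigenvalues (in non-increasing order) of $\mathbf{\Sigma}(\mathbf{X})$ and $\mathbf{\Sigma}(\mathbf{X}')$ respectively. Then $$\|\mathbf{\Lambda}-\mathbf{\Lambda}'\|_F\le \frac{\sqrt{2}}{n}.$$
   Context: $\mathcal{B}_d$ denotes the closed unit $\ell_2$-ball in $\mathbb{R}^d$ centered at the origin. A dataset is a matrix $\mathbf{X}\in\mathbb{R}^{d\times n}$ whose columns $X_1,\dots,X_n$ are the individuals' vectors. Two datasets $\mathbf{X},\mathbf{X}'\in\mathbb{R}^{d\times n}$ are neighbors if they differ in exactly one column. The empirical covariance is $\mathbf{\Sigma}(\mathbf{X})=\frac1n\sum_i X_iX_i^T=\frac1n\mathbf{X}\mathbf{X}^T$. *)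

theory Defs
  imports "Jordan_Normal_Form.Matrix" "Jordan_Normal_Form.Char_Poly"
begin

text \<open>Datasets are d x n real matrices (columns = individuals).\<close>

definition in_unit_ball_cols :: "real mat \<Rightarrow> bool" where
  "in_unit_ball_cols X \<longleftrightarrow> (\<forall>j < dim_col X. (\<Sum>i < dim_row X. (X $$ (i, j))\<^sup>2) \<le> 1)"

definition neighbors :: "real mat \<Rightarrow> real mat \<Rightarrow> bool" where
  "neighbors X X' \<longleftrightarrow> dim_row X = dim_row X' \<and> dim_col X = dim_col X' \<and>
     card {j. j < dim_col X \<and> col X j \<noteq> col X' j} = 1"

definition emp_cov :: "real mat \<Rightarrow> real mat" where
  "emp_cov X = (1 / real (dim_col X)) \<cdot>\<^sub>m (X * transpose_mat X)"

definition eigenvalues_desc :: "real mat \<Rightarrow> real list" where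
  "eigenvalues_desc A = rev (sorted_list_of_multiset (proots (char_poly A)))"

end

theory Submission
  imports Defs "Jordan_Normal_Form.Schur_Decomposition"
    "HOL-Computational_Algebra.Fundamental_Theorem_Algebra"
begin

text \<open>Zero out the column \<open>j\<^sub>0\<close> in which \<open>X\<close> and \<open>X'\<close> differ. The resulting covariance
  \<open>C\<close> is common to both, and \<open>\<Sigma>(X)\<close>, \<open>\<Sigma>(X')\<close> arise from it by adding the positive
  semidefinite rank-one matrices \<open>x x\<^sup>T / n\<close>, \<open>x' x'\<^sup>T / n\<close> with \<open>\<parallel>x\<parallel>, \<parallel>x'\<parallel> \<le> 1\<close>.
  By Courant--Fischer such an update raises every eigenvalue, and comparing traces shows that
  the increases sum to at most \<open>1/n\<close>. So \<open>\<lambda>\<^sub>k = c\<^sub>k + p\<^sub>k\<close> and \<open>\<lambda>'\<^sub>k = c\<^sub>k + q\<^sub>k\<close> with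
  \<open>p, q \<ge> 0\<close> and \<open>\<Sum>p, \<Sum>q \<le> 1/n\<close>, whence \<open>\<Sum>(\<lambda>\<^sub>k - \<lambda>'\<^sub>k)\<^sup>2 \<le> \<Sum>p\<^sup>2 + \<Sum>q\<^sup>2 \<le> 2/n\<^sup>2\<close>.
  Ordered eigenvalues come from a spectral theorem with sorted eigenvalues, proved by
  repeatedly splitting off a largest eigenvalue.\<close>

lemma scalar_prodc_real [simp]: "(v :: real vec) \<bullet>c w = v \<bullet> w"
  by (simp add: conjugate_vec_def)

section \<open>The spectral theorem for real symmetric matrices\<close>

text \<open>A complex eigenvalue \<open>l\<close> with eigenvector \<open>v\<close> satisfies
  \<open>l \<cdot> \<Sum>|v\<^sub>i|\<^sup>2 = v\<^sup>* A v\<close>, and the right-hand side is real by symmetry.\<close>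
lemma real_symmetric_has_eigenvalue:
  fixes A :: "real mat"
  assumes A: "A \<in> carrier_mat n n" and n: "n > 0" and sym: "transpose_mat A = A"
  shows "\<exists>e. eigenvalue A e"
proof -
  define Ac where "Ac = map_mat complex_of_real A"
  have Ac: "Ac \<in> carrier_mat n n" using A unfolding Ac_def by auto
  have cp: "char_poly Ac = map_poly of_real (char_poly A)"
    unfolding Ac_def by (rule of_real_hom.char_poly_hom[OF A])
  have "degree (char_poly Ac) = n"
    using degree_monic_char_poly[OF Ac] by auto
  hence "\<not> constant (poly (char_poly Ac))"
    using n by (simp add: constant_degree)
  then obtain l where root: "poly (char_poly Ac) l = 0"
    using fundamental_theorem_of_algebra by blast
  hence "eigenvalue Ac l" using eigenvalue_root_char_poly[OF Ac] by auto
  then obtain v where v: "v \<in> carrier_vec n" "v \<noteq> 0\<^sub>v n" "Ac *\<^sub>v v = l \<cdot>\<^sub>v v"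
    unfolding eigenvalue_def eigenvector_def using Ac by auto
  define s where "s = (\<Sum>i<n. cnj (v $ i) * (Ac *\<^sub>v v) $ i)"
  define N where "N = (\<Sum>i<n. (cmod (v $ i))\<^sup>2)"
  have s_eigen: "s = l * of_real N"
  proof -
    have "s = (\<Sum>i<n. l * (cnj (v $ i) * v $ i))"
      unfolding s_def v(3) using v(1) by (intro sum.cong, auto)
    also have "\<dots> = l * (\<Sum>i<n. of_real ((cmod (v $ i))\<^sup>2))"
    proof -
      have "\<And>a. cnj a * a = complex_of_real ((cmod a)\<^sup>2)"
        by (metis complex_norm_square mult.commute)
      thus ?thesis by (simp add: sum_distrib_left)
    qed
    finally show ?thesis unfolding N_def by simp
  qed
  have s_entries: "s = (\<Sum>i<n. \<Sum>j<n. cnj (v $ i) * of_real (A $$ (i,j)) * v $ j)"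
    unfolding s_def using A v(1)
    by (auto simp: Ac_def mult_mat_vec_def scalar_prod_def sum_distrib_left mult.assoc
        atLeast0LessThan intro!: sum.cong)
  have "cnj s = (\<Sum>i<n. \<Sum>j<n. v $ i * of_real (A $$ (i,j)) * cnj (v $ j))"
    unfolding s_entries by simp
  also have "\<dots> = (\<Sum>j<n. \<Sum>i<n. v $ i * of_real (A $$ (i,j)) * cnj (v $ j))"
    by (rule sum.swap)
  also have "\<dots> = s" unfolding s_entries
  proof (intro sum.cong refl)
    fix i j assume "i \<in> {..<n}" "j \<in> {..<n}"
    hence "A $$ (j,i) = A $$ (i,j)" using arg_cong[OF sym, of "\<lambda>M. M $$ (i,j)"] A by auto
    thus "v $ j * of_real (A $$ (j, i)) * cnj (v $ i) = cnj (v $ i) * of_real (A $$ (i, j)) * v $ j"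
      by simp
  qed
  finally have "cnj s = s" .
  moreover have "N > 0"
  proof -
    from v(1,2) obtain i where i: "i < n" "v $ i \<noteq> 0" by (auto simp: vec_eq_iff)
    have "(cmod (v $ i))\<^sup>2 \<le> N" unfolding N_def
      by (rule member_le_sum[where f = "\<lambda>i. (cmod (v $ i))\<^sup>2"], insert i, auto)
    moreover have "(cmod (v $ i))\<^sup>2 > 0" using i by simp
    ultimately show ?thesis by linarith
  qed
  ultimately have "cnj l = l" unfolding s_eigen by simp
  hence "l = of_real (Re l)" by (simp add: complex_eq_iff)
  hence "poly (map_poly of_real (char_poly A)) (of_real (Re l) :: complex) = 0"
    using root cp by metis
  hence "poly (char_poly A) (Re l) = 0" by simp
  thus ?thesis using eigenvalue_root_char_poly[OF A] by auto
qed

definition orthogonal_eigen_decomp :: "nat \<Rightarrow> real mat \<Rightarrow> real mat \<Rightarrow> real list \<Rightarrow> bool" where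
  "orthogonal_eigen_decomp n A U ms \<longleftrightarrow> U \<in> carrier_mat n n \<and> transpose_mat U * U = 1\<^sub>m n
     \<and> length ms = n \<and> A = U * mat_diag n (\<lambda>i. ms ! i) * transpose_mat U"

lemma orthogonal_eigen_decompD:
  assumes "orthogonal_eigen_decomp n A U ms"
  shows "U \<in> carrier_mat n n" "transpose_mat U * U = 1\<^sub>m n" "U * transpose_mat U = 1\<^sub>m n"
    "length ms = n" "A = U * mat_diag n (\<lambda>i. ms ! i) * transpose_mat U" "A \<in> carrier_mat n n"
  using assms mat_mult_left_right_inverse[of "transpose_mat U" n U]
  unfolding orthogonal_eigen_decomp_def by auto

lemma orthogonal_eigen_decomp_eigenvalue:
  assumes dec: "orthogonal_eigen_decomp n A U ms" and k: "k < n"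
  shows "eigenvalue A (ms ! k)"
proof -
  note U = orthogonal_eigen_decompD[OF dec]
  let ?c = "col U k" and ?D = "mat_diag n (\<lambda>i. ms ! i)"
  have c: "?c \<in> carrier_vec n" using U(1) by auto
  have Ut_c: "transpose_mat U *\<^sub>v ?c = unit_vec n k"
    using col_mult2[of "transpose_mat U" n n U n k] U k col_one[OF k] by auto
  moreover have "?D *\<^sub>v unit_vec n k = ms ! k \<cdot>\<^sub>v unit_vec n k"
    by (rule eq_vecI, insert k, auto simp: mat_diag_def scalar_prod_right_unit)
  moreover have "U *\<^sub>v unit_vec n k = ?c"
    by (rule eq_vecI, insert U k, auto simp: scalar_prod_right_unit)
  moreover have "A *\<^sub>v ?c = U *\<^sub>v (?D *\<^sub>v (transpose_mat U *\<^sub>v ?c))"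
    using U c by (simp add: assoc_mult_mat_vec[of _ n n _ n])
  ultimately have Ac: "A *\<^sub>v ?c = ms ! k \<cdot>\<^sub>v ?c" using U by (simp add: mult_mat_vec)
  have "?c \<noteq> 0\<^sub>v n"
  proof
    assume "?c = 0\<^sub>v n"
    hence "transpose_mat U *\<^sub>v ?c = 0\<^sub>v n" using U by auto
    thus False using Ut_c unit_vec_nonzero[OF k] by metis
  qed
  thus ?thesis unfolding eigenvalue_def eigenvector_def using U c Ac by auto
qed

lemma orthonormal_normalize:
  fixes ws :: "real vec list"
  assumes ws: "set ws \<subseteq> carrier_vec n" "corthogonal ws"
    and i: "i < length ws" and j: "j < length ws"
  defines "nws \<equiv> map (\<lambda>w. (1 / sqrt (w \<bullet> w)) \<cdot>\<^sub>v w) ws"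
  shows "nws ! i \<bullet> nws ! j = (if i = j then 1 else 0)"
proof -
  have wi: "ws ! i \<in> carrier_vec n" "ws ! j \<in> carrier_vec n" using ws i j by auto
  have pos: "ws ! i \<bullet> ws ! i > 0"
  proof -
    have "ws ! i \<bullet> ws ! i \<noteq> 0" using corthogonalD[OF ws(2) i i] by simp
    moreover have "ws ! i \<bullet> ws ! i \<ge> 0" unfolding scalar_prod_def by (auto intro: sum_nonneg)
    ultimately show ?thesis by linarith
  qed
  have "nws ! i \<bullet> nws ! j
      = (1 / sqrt (ws ! i \<bullet> ws ! i)) * (1 / sqrt (ws ! j \<bullet> ws ! j)) * (ws ! i \<bullet> ws ! j)"
    unfolding nws_def using i j wi
    by (simp add: smult_scalar_prod_distrib[of _ n] scalar_prod_smult_distrib[of _ n])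
  also have "\<dots> = (if i = j then 1 else 0)"
  proof (cases "i = j")
    case True
    thus ?thesis using pos by (simp add: field_simps)
  next
    case False
    thus ?thesis using corthogonalD[OF ws(2) i j] by simp
  qed
  finally show ?thesis .
qed

lemma orthonormal_completion:
  fixes v :: "real vec"
  assumes v: "v \<in> carrier_vec n" and v0: "v \<noteq> 0\<^sub>v n"
  shows "\<exists>W. W \<in> carrier_mat n n \<and> transpose_mat W * W = 1\<^sub>m n
    \<and> col W 0 = (1 / sqrt (v \<bullet> v)) \<cdot>\<^sub>v v"
proof -
  interpret cof_vec_space n "TYPE(real)" .
  define b where "b = basis_completion v"
  from basis_completion[OF v v0, folded b_def]
  have b: "distinct b" "\<not> lin_dep (set b)" "set b \<subseteq> carrier_vec n" "hd b = v" "length b = n"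
    by auto
  have "n > 0" using v v0 by (cases n, auto)
  with b obtain vs where bv: "b = v # vs" by (cases b, auto)
  define ws where "ws = gram_schmidt n b"
  from gram_schmidt_result[OF b(3,1,2) refl, folded ws_def]
  have ws: "set ws \<subseteq> carrier_vec n" "corthogonal ws" "length ws = n"
    by (auto simp: b(5))
  have hd_ws: "hd ws = v" using gram_schmidt_hd[OF v, of vs] unfolding ws_def bv .
  define nws where "nws = map (\<lambda>w. (1 / sqrt (w \<bullet> w)) \<cdot>\<^sub>v w) ws"
  have nws: "set nws \<subseteq> carrier_vec n" "length nws = n"
    unfolding nws_def using ws by auto
  define W where "W = mat_of_cols n nws"
  have W: "W \<in> carrier_mat n n"
    unfolding W_def using mat_of_cols_carrier(1)[of n nws] nws(2) by simp
  have col_W: "col W j = nws ! j" if "j < n" for j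
    unfolding W_def using that nws by (intro col_mat_of_cols) auto
  have orthonormal: "nws ! i \<bullet> nws ! j = (if i = j then 1 else 0)" if "i < n" "j < n" for i j
    unfolding nws_def using orthonormal_normalize[OF ws(1,2)] that ws(3) by simp
  have "transpose_mat W * W = 1\<^sub>m n"
    by (rule eq_matI, insert W, auto simp: col_W orthonormal)
  moreover have "nws ! 0 = (1 / sqrt (v \<bullet> v)) \<cdot>\<^sub>v v"
    unfolding nws_def using hd_ws ws(3) \<open>n > 0\<close> by (cases ws, auto)
  ultimately show ?thesis using W col_W \<open>n > 0\<close> by auto
qed

lemma real_symmetric_max_eigenvalue:
  fixes A :: "real mat"
  assumes A: "A \<in> carrier_mat n n" and n: "n > 0" and sym: "transpose_mat A = A"
  shows "\<exists>e. eigenvalue A e \<and> (\<forall>e'. eigenvalue A e' \<longrightarrow> e' \<le> e)"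
proof -
  define E where "E = {e. eigenvalue A e}"
  have "char_poly A \<noteq> 0" using degree_monic_char_poly[OF A] by auto
  hence "finite E"
    unfolding E_def eigenvalue_root_char_poly[OF A] by (rule poly_roots_finite)
  moreover have "E \<noteq> {}" using real_symmetric_has_eigenvalue[OF A n sym] unfolding E_def by auto
  ultimately show ?thesis using Max_in Max_ge unfolding E_def by blast
qed

lemma congruence_index:
  fixes A W :: "'a :: comm_ring_1 mat"
  assumes A: "A \<in> carrier_mat n n" and W: "W \<in> carrier_mat n n" and ij: "i < n" "j < n"
  shows "(transpose_mat W * A * W) $$ (i,j) = col W i \<bullet> (A *\<^sub>v col W j)"
proof -
  have "transpose_mat W * A * W = transpose_mat W * (A * W)"
    using A W by (simp add: assoc_mult_mat[of _ n n _ n _ n])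
  hence "(transpose_mat W * A * W) $$ (i,j) = row (transpose_mat W) i \<bullet> col (A * W) j"
    using ij A W by simp
  also have "col (A * W) j = A *\<^sub>v col W j" by (rule col_mult2[OF A W ij(2)])
  also have "row (transpose_mat W) i = col W i" using W ij by simp
  finally show ?thesis .
qed

lemma orthonormal_cols:
  fixes W :: "'a :: comm_ring_1 mat"
  assumes W: "W \<in> carrier_mat n n" "transpose_mat W * W = 1\<^sub>m n" and ij: "i < n" "j < n"
  shows "col W i \<bullet> col W j = (if i = j then 1 else 0)"
proof -
  have "col W i \<bullet> col W j = (transpose_mat W * W) $$ (i, j)" using W(1) ij by simp
  thus ?thesis unfolding W(2) using ij by simp
qed

lemma eigenvector_deflation:
  fixes A W :: "real mat"
  assumes A: "A \<in> carrier_mat (Suc m) (Suc m)" and sym: "transpose_mat A = A"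
    and W: "W \<in> carrier_mat (Suc m) (Suc m)" "transpose_mat W * W = 1\<^sub>m (Suc m)"
    and eigen: "A *\<^sub>v col W 0 = e \<cdot>\<^sub>v col W 0"
  shows "\<exists>B. B \<in> carrier_mat m m \<and> transpose_mat B = B
    \<and> transpose_mat W * A * W = four_block_mat (mat 1 1 (\<lambda>_. e)) (0\<^sub>m 1 m) (0\<^sub>m m 1) B"
proof -
  let ?n = "Suc m" and ?E = "mat 1 1 (\<lambda>_. e) :: real mat"
  define A' where "A' = transpose_mat W * A * W"
  have A': "A' \<in> carrier_mat ?n ?n" unfolding A'_def using A W by auto
  note A'_index = congruence_index[OF A W(1), folded A'_def]
  have A'_sym: "A' $$ (i,j) = A' $$ (j,i)" if ij: "i < ?n" "j < ?n" for i j
  proof -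
    have "col W i \<bullet> (A *\<^sub>v col W j) = (transpose_mat A *\<^sub>v col W i) \<bullet> col W j"
      using transpose_vec_mult_scalar[OF A, of "col W j" "col W i"] ij W by auto
    also have "\<dots> = col W j \<bullet> (A *\<^sub>v col W i)" unfolding sym
      by (rule comm_scalar_prod[of _ ?n], insert A W ij, auto)
    finally show ?thesis using A'_index ij by simp
  qed
  have A'_col0: "A' $$ (i,0) = (if i = 0 then e else 0)" if i: "i < ?n" for i
    using A'_index[OF i] eigen orthonormal_cols[OF W i] W i
    by (simp add: scalar_prod_smult_distrib[of _ ?n])
  define B where "B = mat m m (\<lambda>(i,j). A' $$ (Suc i, Suc j))"
  have B: "B \<in> carrier_mat m m" unfolding B_def by simp
  have "transpose_mat B = B" by (rule eq_matI, insert A'_sym, auto simp: B_def)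
  moreover have "A' = four_block_mat ?E (0\<^sub>m 1 m) (0\<^sub>m m 1) B"
  proof (rule eq_matI)
    fix i j assume "i < dim_row (four_block_mat ?E (0\<^sub>m 1 m) (0\<^sub>m m 1) B)"
      "j < dim_col (four_block_mat ?E (0\<^sub>m 1 m) (0\<^sub>m m 1) B)"
    hence i: "i < ?n" and j: "j < ?n" using B by auto
    show "A' $$ (i, j) = four_block_mat ?E (0\<^sub>m 1 m) (0\<^sub>m m 1) B $$ (i, j)"
    proof (cases "i = 0 \<or> j = 0")
      case True
      thus ?thesis using A'_col0[OF i] A'_col0[OF j] A'_sym[OF i j] i j B by auto
    next
      case False
      then obtain i' j' where "i = Suc i'" "j = Suc j'" by (cases i; cases j; auto)
      thus ?thesis using i j B by (auto simp: B_def)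
    qed
  qed (insert A' B, auto)
  ultimately show ?thesis using B unfolding A'_def by blast
qed

lemma mat_diag_Cons:
  "mat_diag (Suc m) (\<lambda>i. (e # ms) ! i)
     = four_block_mat (mat 1 1 (\<lambda>_. e)) (0\<^sub>m 1 m) (0\<^sub>m m 1) (mat_diag m (\<lambda>i. ms ! i))"
  by (rule eq_matI, auto simp: mat_diag_def nth_Cons')

lemma orthogonal_eigen_decomp_block:
  assumes dec: "orthogonal_eigen_decomp m B U ms"
  shows "orthogonal_eigen_decomp (Suc m) (four_block_mat (mat 1 1 (\<lambda>_. e)) (0\<^sub>m 1 m) (0\<^sub>m m 1) B)
    (four_block_mat (1\<^sub>m 1) (0\<^sub>m 1 m) (0\<^sub>m m 1) U) (e # ms)"
proof -
  let ?E = "mat 1 1 (\<lambda>_. e) :: real mat"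
  note U = orthogonal_eigen_decompD[OF dec]
  define V where "V = four_block_mat (1\<^sub>m 1) (0\<^sub>m 1 m) (0\<^sub>m m 1) U"
  define D where "D = mat_diag m (\<lambda>i. ms ! i)"
  have D: "D \<in> carrier_mat m m" unfolding D_def by simp
  have carriers: "?E \<in> carrier_mat 1 1" "(1\<^sub>m 1 :: real mat) \<in> carrier_mat 1 1"
    "(0\<^sub>m 1 m :: real mat) \<in> carrier_mat 1 m" "(0\<^sub>m m 1 :: real mat) \<in> carrier_mat m 1"
    "transpose_mat U \<in> carrier_mat m m" "U * D \<in> carrier_mat m m"
    using U D by auto
  have Vt: "transpose_mat V = four_block_mat (1\<^sub>m 1) (0\<^sub>m 1 m) (0\<^sub>m m 1) (transpose_mat U)"
    unfolding V_def using U by (subst transpose_four_block_mat, auto)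
  have "V * four_block_mat ?E (0\<^sub>m 1 m) (0\<^sub>m m 1) D
      = four_block_mat ?E (0\<^sub>m 1 m) (0\<^sub>m m 1) (U * D)"
    unfolding V_def mult_four_block_mat[OF carriers(2,3,4) U(1) carriers(1,3,4) D]
    using U D by simp
  also have "\<dots> * transpose_mat V
      = four_block_mat ?E (0\<^sub>m 1 m) (0\<^sub>m m 1) (U * D * transpose_mat U)"
    unfolding Vt mult_four_block_mat[OF carriers(1,3,4,6,2,3,4,5)]
    using U D by simp
  finally have "V * mat_diag (Suc m) (\<lambda>i. (e # ms) ! i) * transpose_mat V
      = four_block_mat ?E (0\<^sub>m 1 m) (0\<^sub>m m 1) B"
    unfolding mat_diag_Cons U(5) D_def[symmetric] .
  moreover have "transpose_mat V * V = 1\<^sub>m (Suc m)"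
    unfolding Vt unfolding V_def mult_four_block_mat[OF carriers(2,3,4,5,2,3,4) U(1)]
    using U by simp
  moreover have "V \<in> carrier_mat (Suc m) (Suc m)" unfolding V_def using U by auto
  ultimately show ?thesis using U(4) unfolding orthogonal_eigen_decomp_def V_def by simp
qed

lemma orthogonal_eigen_decomp_congruence:
  fixes A W V :: "real mat"
  assumes A: "A \<in> carrier_mat n n"
    and W: "W \<in> carrier_mat n n" "transpose_mat W * W = 1\<^sub>m n"
    and dec: "orthogonal_eigen_decomp n (transpose_mat W * A * W) V ms"
  shows "orthogonal_eigen_decomp n A (W * V) ms"
proof -
  note V = orthogonal_eigen_decompD[OF dec]
  let ?D = "mat_diag n (\<lambda>i. ms ! i)"
  have Wt: "transpose_mat W \<in> carrier_mat n n" using W(1) by auto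
  have WWt: "W * transpose_mat W = 1\<^sub>m n"
    using mat_mult_left_right_inverse[OF _ W(1) W(2)] W by auto
  have "transpose_mat (W * V) * (W * V) = transpose_mat V * (transpose_mat W * W) * V"
    using W(1) V(1) by (simp add: transpose_mult assoc_mult_mat[of _ n n _ n _ n])
  hence orthogonal: "transpose_mat (W * V) * (W * V) = 1\<^sub>m n" using W V by simp
  have "W * V * ?D * transpose_mat (W * V) = W * (V * ?D * transpose_mat V) * transpose_mat W"
    unfolding transpose_mult[OF W(1) V(1)] using W(1) V(1) Wt
    by (simp add: assoc_mult_mat[of _ n n _ n _ n] mult_carrier_mat[of _ n n _ n])
  also have "\<dots> = (W * transpose_mat W) * A * (W * transpose_mat W)"
    unfolding V(5)[symmetric] using W(1) A Wt
    by (simp add: assoc_mult_mat[of _ n n _ n _ n] mult_carrier_mat[of _ n n _ n])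
  also have "\<dots> = A" unfolding WWt using A by simp
  finally show ?thesis
    using W(1) V(1,4) orthogonal unfolding orthogonal_eigen_decomp_def by auto
qed

theorem real_symmetric_sorted_eigen_decomp:
  fixes A :: "real mat"
  assumes "A \<in> carrier_mat n n" "transpose_mat A = A"
  shows "\<exists>U ms. orthogonal_eigen_decomp n A U ms \<and> sorted (rev ms)"
  using assms
proof (induction n arbitrary: A)
  case 0
  hence "orthogonal_eigen_decomp 0 A (1\<^sub>m 0) []"
    unfolding orthogonal_eigen_decomp_def by (intro conjI eq_matI) auto
  moreover have "sorted (rev ([] :: real list))" by simp
  ultimately show ?case by blast
next
  case (Suc m A)
  note A = Suc.prems(1) and sym = Suc.prems(2)
  text \<open>Splitting off the largest eigenvalue first makes the eigenvalue list come out sorted.\<close>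
  obtain e where "eigenvalue A e" and e_max: "\<And>e'. eigenvalue A e' \<Longrightarrow> e' \<le> e"
    using real_symmetric_max_eigenvalue[OF A _ sym] by blast
  then obtain v where v: "v \<in> carrier_vec (Suc m)" "v \<noteq> 0\<^sub>v (Suc m)" "A *\<^sub>v v = e \<cdot>\<^sub>v v"
    unfolding eigenvalue_def eigenvector_def using A by auto
  obtain W where W: "W \<in> carrier_mat (Suc m) (Suc m)" "transpose_mat W * W = 1\<^sub>m (Suc m)"
    and col_W: "col W 0 = (1 / sqrt (v \<bullet> v)) \<cdot>\<^sub>v v"
    using orthonormal_completion[OF v(1,2)] by blast
  have eigen: "A *\<^sub>v col W 0 = e \<cdot>\<^sub>v col W 0"
    unfolding col_W using A v by (simp add: mult_mat_vec smult_smult_assoc mult.commute)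
  obtain B where B: "B \<in> carrier_mat m m" "transpose_mat B = B"
    and block: "transpose_mat W * A * W = four_block_mat (mat 1 1 (\<lambda>_. e)) (0\<^sub>m 1 m) (0\<^sub>m m 1) B"
    using eigenvector_deflation[OF A sym W eigen] by blast
  obtain U ms where dec: "orthogonal_eigen_decomp m B U ms" and sorted: "sorted (rev ms)"
    using Suc.IH[OF B] by blast
  note dec' = orthogonal_eigen_decomp_congruence[OF A W
      orthogonal_eigen_decomp_block[OF dec, of e, folded block]]
  have "x \<le> e" if x_in: "x \<in> set ms" for x
  proof -
    obtain k where k: "k < length ms" and "x = ms ! k"
      using x_in by (auto simp: in_set_conv_nth)
    hence x: "x = (e # ms) ! Suc k" by simp
    have "Suc k < Suc m" using k orthogonal_eigen_decompD(4)[OF dec] by simp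
    thus ?thesis unfolding x by (intro e_max orthogonal_eigen_decomp_eigenvalue[OF dec'])
  qed
  hence "sorted (rev (e # ms))" using sorted by (auto simp: sorted_append)
  thus ?case using dec' by blast
qed

lemma proots_prod_linear_factors: "proots (\<Prod>a\<leftarrow>ms. [:- a, 1:]) = mset (ms :: real list)"
proof (induction ms)
  case (Cons a ms)
  have "(\<Prod>a\<leftarrow>ms. [:- a, 1:]) \<noteq> (0 :: real poly)"
    by (subst prod_list_zero_iff, auto)
  hence "proots ([:- a, 1:] * (\<Prod>x\<leftarrow>ms. [:- x, 1:])) = proots [:- a, 1:] + proots (\<Prod>x\<leftarrow>ms. [:- x, 1:])"
    by (intro proots_mult) auto
  thus ?case using Cons proots_linear_factor[of "- a"] by simp
qed simp

lemma eigenvalues_desc_orthogonal_eigen_decomp: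
  assumes dec: "orthogonal_eigen_decomp n A U ms" and sorted: "sorted (rev ms)"
  shows "eigenvalues_desc A = ms"
proof -
  note U = orthogonal_eigen_decompD[OF dec]
  let ?D = "mat_diag n (\<lambda>i. ms ! i)"
  have "similar_mat A ?D" unfolding similar_mat_def
    by (rule exI[of _ U], rule exI[of _ "transpose_mat U"], insert U,
        auto simp: similar_mat_wit_def Let_def)
  hence "char_poly A = char_poly ?D" by (rule char_poly_similar)
  also have "\<dots> = (\<Prod>a\<leftarrow>diag_mat ?D. [:- a, 1:])"
    by (rule char_poly_upper_triangular[OF mat_diag_dim], auto simp: upper_triangular_def mat_diag_def)
  also have "diag_mat ?D = ms"
    by (rule nth_equalityI, insert U(4), auto simp: diag_mat_def mat_diag_def)
  finally have "proots (char_poly A) = mset ms" using proots_prod_linear_factors by simp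
  hence "eigenvalues_desc A = rev (sort ms)"
    unfolding eigenvalues_desc_def by (simp add: sorted_list_of_multiset_mset)
  also have "sort ms = sort (rev ms)" by (metis mset_rev sorted_list_of_multiset_mset)
  also have "\<dots> = rev ms" using sorted by (simp add: sorted_sort_id)
  finally show ?thesis by simp
qed

lemma quadratic_form_orthogonal_eigen_decomp:
  assumes dec: "orthogonal_eigen_decomp n A U ms" and x: "x \<in> carrier_vec n"
  shows "x \<bullet> (A *\<^sub>v x) = (\<Sum>j<n. ms ! j * ((transpose_mat U *\<^sub>v x) $ j)\<^sup>2)"
    and "x \<bullet> x = (\<Sum>j<n. ((transpose_mat U *\<^sub>v x) $ j)\<^sup>2)"
proof -
  note U = orthogonal_eigen_decompD[OF dec]
  let ?D = "mat_diag n (\<lambda>i. ms ! i)"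
  define y where "y = transpose_mat U *\<^sub>v x"
  have y: "y \<in> carrier_vec n" unfolding y_def using U by (intro carrier_vecI) auto
  have "x \<bullet> (A *\<^sub>v x) = x \<bullet> (U *\<^sub>v (?D *\<^sub>v y))"
    unfolding U(5) y_def using U x by (simp add: assoc_mult_mat_vec[of _ n n _ n])
  also have "\<dots> = y \<bullet> (?D *\<^sub>v y)"
  proof -
    have "(transpose_mat U *\<^sub>v x) \<bullet> (?D *\<^sub>v y) = x \<bullet> (U *\<^sub>v (?D *\<^sub>v y))"
      using transpose_vec_mult_scalar[OF U(1) mult_mat_vec_carrier[OF mat_diag_dim y] x] .
    thus ?thesis unfolding y_def[symmetric] by simp
  qed
  also have "?D *\<^sub>v y = vec n (\<lambda>j. ms ! j * y $ j)"
  proof -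
    have "row ?D i = ms ! i \<cdot>\<^sub>v unit_vec n i" if "i < n" for i
      by (rule eq_vecI, insert that, auto simp: mat_diag_def)
    moreover have "dim_row ?D = n" unfolding mat_diag_def by simp
    ultimately show ?thesis
      by (intro eq_vecI, insert y, auto simp: smult_scalar_prod_distrib[of _ n])
  qed
  finally show "x \<bullet> (A *\<^sub>v x) = (\<Sum>j<n. ms ! j * ((transpose_mat U *\<^sub>v x) $ j)\<^sup>2)"
    using y unfolding y_def[symmetric]
    by (simp add: scalar_prod_def power2_eq_square atLeast0LessThan mult.left_commute)
  have "x = U *\<^sub>v y"
    unfolding y_def using U x by (simp add: assoc_mult_mat_vec[of _ n n _ n, symmetric])
  hence "x \<bullet> x = y \<bullet> y"
    using transpose_vec_mult_scalar[OF U(1) y x] unfolding y_def by simp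
  thus "x \<bullet> x = (\<Sum>j<n. ((transpose_mat U *\<^sub>v x) $ j)\<^sup>2)"
    using y unfolding y_def[symmetric] by (simp add: scalar_prod_def power2_eq_square atLeast0LessThan)
qed

lemma trace_orthogonal_eigen_decomp:
  assumes dec: "orthogonal_eigen_decomp n A U ms"
  shows "(\<Sum>i<n. A $$ (i,i)) = (\<Sum>j<n. ms ! j)"
proof -
  note U = orthogonal_eigen_decompD[OF dec]
  have "(\<Sum>i<n. A $$ (i,i)) = (\<Sum>i<n. \<Sum>j<n. ms ! j * (U $$ (i,j))\<^sup>2)"
  proof (rule sum.cong[OF refl])
    fix i assume i: "i \<in> {..<n}"
    have "A $$ (i,i) = unit_vec n i \<bullet> (A *\<^sub>v unit_vec n i)" using i U(6)
      by (simp add: scalar_prod_right_unit)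
    also have "\<dots> = (\<Sum>j<n. ms ! j * ((transpose_mat U *\<^sub>v unit_vec n i) $ j)\<^sup>2)"
      by (rule quadratic_form_orthogonal_eigen_decomp(1)[OF dec unit_vec_carrier])
    also have "\<dots> = (\<Sum>j<n. ms ! j * (U $$ (i,j))\<^sup>2)"
      using i U(1) by (intro sum.cong, auto simp: scalar_prod_right_unit)
    finally show "A $$ (i,i) = (\<Sum>j<n. ms ! j * (U $$ (i,j))\<^sup>2)" .
  qed
  also have "\<dots> = (\<Sum>j<n. ms ! j * (\<Sum>i<n. (U $$ (i,j))\<^sup>2))"
    by (subst sum.swap, simp add: sum_distrib_left)
  also have "\<dots> = (\<Sum>j<n. ms ! j)"
  proof (rule sum.cong[OF refl])
    fix j assume j: "j \<in> {..<n}"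
    have "(transpose_mat U * U) $$ (j,j) = (\<Sum>i<n. (U $$ (i,j))\<^sup>2)"
      using j U(1) by (simp add: scalar_prod_def power2_eq_square atLeast0LessThan)
    thus "ms ! j * (\<Sum>i<n. (U $$ (i,j))\<^sup>2) = ms ! j" using U(2) j by simp
  qed
  finally show ?thesis .
qed

section \<open>Monotonicity of eigenvalues in the Loewner order\<close>

text \<open>\<open>k\<close> homogeneous equations in \<open>k + 1\<close> unknowns have a nonzero solution.\<close>
lemma exists_nonzero_prefix_vec_killing_rows:
  fixes G :: "real mat"
  assumes G: "G \<in> carrier_mat n n" and k: "k < n"
  shows "\<exists>z. z \<in> carrier_vec n \<and> z \<noteq> 0\<^sub>v n \<and> (\<forall>j. k < j \<and> j < n \<longrightarrow> z $ j = 0)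
     \<and> (\<forall>i < k. (G *\<^sub>v z) $ i = 0)"
proof -
  define H where "H = mat n n (\<lambda>(i,j). if i < k then G $$ (i,j) else if i = k then 0
     else if i = j then 1 else 0)"
  have H: "H \<in> carrier_mat n n" unfolding H_def by simp
  have "transpose_mat H *\<^sub>v unit_vec n k = 0\<^sub>v n"
    by (rule eq_vecI, insert H k, auto simp: scalar_prod_right_unit H_def)
  moreover have "transpose_mat H \<in> carrier_mat n n" using H by simp
  ultimately have "det (transpose_mat H) = 0"
    using det_0_iff_vec_prod_zero k unit_vec_nonzero[OF k] unit_vec_carrier by blast
  hence "det H = 0" using det_transpose[OF H] by simp
  then obtain z where z: "z \<in> carrier_vec n" "z \<noteq> 0\<^sub>v n" "H *\<^sub>v z = 0\<^sub>v n"
    using det_0_iff_vec_prod_zero[OF H] by blast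
  have Hz: "row H i \<bullet> z = 0" if "i < n" for i
    using arg_cong[OF z(3), of "\<lambda>v. v $ i"] that H by simp
  have "z $ j = 0" if j: "k < j" "j < n" for j
  proof -
    have "row H j = unit_vec n j" by (rule eq_vecI, insert j H, auto simp: H_def)
    thus ?thesis using Hz[of j] j scalar_prod_left_unit[OF z(1) j(2)] by simp
  qed
  moreover have "(G *\<^sub>v z) $ i = 0" if i: "i < k" for i
  proof -
    have "row H i = row G i" by (rule eq_vecI, insert i k H G, auto simp: H_def)
    thus ?thesis using Hz[of i] i k G by simp
  qed
  ultimately show ?thesis using z by blast
qed

lemma weighted_sum_squares_ge_of_support_le:
  fixes z :: "nat \<Rightarrow> real"
  assumes sorted: "sorted (rev cs)" and len: "length cs = n" and k: "k < n"
    and support: "\<And>j. k < j \<Longrightarrow> j < n \<Longrightarrow> z j = 0"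
  shows "cs ! k * (\<Sum>j<n. (z j)\<^sup>2) \<le> (\<Sum>j<n. cs ! j * (z j)\<^sup>2)"
  unfolding sum_distrib_left
proof (rule sum_mono)
  fix j assume j: "j \<in> {..<n}"
  show "cs ! k * (z j)\<^sup>2 \<le> cs ! j * (z j)\<^sup>2"
  proof (cases "j \<le> k")
    case True
    hence "cs ! k \<le> cs ! j" using sorted_rev_nth_mono[OF sorted True] k len by simp
    thus ?thesis by (simp add: mult_right_mono)
  qed (use support[of j] j in simp)
qed

lemma weighted_sum_squares_le_of_support_ge:
  fixes y :: "nat \<Rightarrow> real"
  assumes sorted: "sorted (rev ms)" and len: "length ms = n"
    and support: "\<And>j. j < k \<Longrightarrow> y j = 0"
  shows "(\<Sum>j<n. ms ! j * (y j)\<^sup>2) \<le> ms ! k * (\<Sum>j<n. (y j)\<^sup>2)"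
  unfolding sum_distrib_left
proof (rule sum_mono)
  fix j assume j: "j \<in> {..<n}"
  show "ms ! j * (y j)\<^sup>2 \<le> ms ! k * (y j)\<^sup>2"
  proof (cases "k \<le> j")
    case True
    hence "ms ! j \<le> ms ! k" using sorted_rev_nth_mono[OF sorted True] j len by simp
    thus ?thesis by (simp add: mult_right_mono)
  qed (use support[of j] in simp)
qed

text \<open>Courant--Fischer: test both quadratic forms on a nonzero vector spanned by the top \<open>k + 1\<close>
  eigenvectors of \<open>C\<close> and orthogonal to the top \<open>k\<close> eigenvectors of \<open>M\<close>.\<close>
lemma eigenvalues_mono:
  fixes C M :: "real mat"
  assumes decC: "orthogonal_eigen_decomp n C U cs" and sorted_cs: "sorted (rev cs)"
    and decM: "orthogonal_eigen_decomp n M W ms" and sorted_ms: "sorted (rev ms)"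
    and le: "\<And>x. x \<in> carrier_vec n \<Longrightarrow> x \<bullet> (C *\<^sub>v x) \<le> x \<bullet> (M *\<^sub>v x)"
    and k: "k < n"
  shows "cs ! k \<le> ms ! k"
proof -
  note U = orthogonal_eigen_decompD[OF decC] and W = orthogonal_eigen_decompD[OF decM]
  have G: "transpose_mat W * U \<in> carrier_mat n n" using U W by simp
  obtain z where z: "z \<in> carrier_vec n" "z \<noteq> 0\<^sub>v n" and zk: "\<And>j. k < j \<Longrightarrow> j < n \<Longrightarrow> z $ j = 0"
    and Gz: "\<And>i. i < k \<Longrightarrow> ((transpose_mat W * U) *\<^sub>v z) $ i = 0"
    using exists_nonzero_prefix_vec_killing_rows[OF G k] by blast
  define x where "x = U *\<^sub>v z"
  have x: "x \<in> carrier_vec n" unfolding x_def using U z by simp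
  have Ux: "transpose_mat U *\<^sub>v x = z" unfolding x_def using U z
    by (simp add: assoc_mult_mat_vec[of _ n n _ n, symmetric])
  define y where "y = transpose_mat W *\<^sub>v x"
  have yk: "y $ i = 0" if "i < k" for i
    using Gz[OF that] unfolding y_def x_def using U W z by (simp add: assoc_mult_mat_vec[of _ n n _ n])
  note quadC = quadratic_form_orthogonal_eigen_decomp[OF decC x, unfolded Ux]
  note quadM = quadratic_form_orthogonal_eigen_decomp[OF decM x, folded y_def]
  have "cs ! k * (x \<bullet> x) \<le> x \<bullet> (C *\<^sub>v x)"
    unfolding quadC using weighted_sum_squares_ge_of_support_le[OF sorted_cs U(4) k] zk by blast
  also have "\<dots> \<le> x \<bullet> (M *\<^sub>v x)" using le[OF x] .
  also have "\<dots> \<le> ms ! k * (x \<bullet> x)"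
    unfolding quadM using weighted_sum_squares_le_of_support_ge[OF sorted_ms W(4)] yk by blast
  finally have "cs ! k * (x \<bullet> x) \<le> ms ! k * (x \<bullet> x)" .
  moreover have "x \<bullet> x > 0"
  proof -
    from z obtain j where j: "j < n" "z $ j \<noteq> 0" by (auto simp: vec_eq_iff)
    have "(z $ j)\<^sup>2 \<le> (\<Sum>j<n. (z $ j)\<^sup>2)"
      by (rule member_le_sum[where f = "\<lambda>j. (z $ j)\<^sup>2"], insert j, auto)
    moreover have "(z $ j)\<^sup>2 > 0" using j by simp
    ultimately show ?thesis unfolding quadC(2) by linarith
  qed
  ultimately show ?thesis by simp
qed

section \<open>Rank-one updates\<close>

lemma quadratic_form_rank_one_update:
  fixes C M :: "real mat"
  assumes C: "C \<in> carrier_mat n n" and M: "M \<in> carrier_mat n n"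
    and update: "\<And>a b. a < n \<Longrightarrow> b < n \<Longrightarrow> M $$ (a,b) = C $$ (a,b) + t * w a * w b"
    and x: "x \<in> carrier_vec n"
  shows "x \<bullet> (M *\<^sub>v x) = x \<bullet> (C *\<^sub>v x) + t * (\<Sum>a<n. w a * x $ a)\<^sup>2"
proof -
  have "x \<bullet> (M *\<^sub>v x) = (\<Sum>a<n. x $ a * (\<Sum>b<n. M $$ (a,b) * x $ b))"
    using M x by (simp add: scalar_prod_def atLeast0LessThan)
  also have "\<dots> = (\<Sum>a<n. x $ a * (\<Sum>b<n. C $$ (a,b) * x $ b))
      + (\<Sum>a<n. \<Sum>b<n. t * (w a * x $ a) * (w b * x $ b))"
    by (simp add: update algebra_simps sum.distrib sum_distrib_left)
  also have "(\<Sum>a<n. x $ a * (\<Sum>b<n. C $$ (a,b) * x $ b)) = x \<bullet> (C *\<^sub>v x)"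
    using C x by (simp add: scalar_prod_def atLeast0LessThan)
  also have "(\<Sum>a<n. \<Sum>b<n. t * (w a * x $ a) * (w b * x $ b)) = t * (\<Sum>a<n. w a * x $ a)\<^sup>2"
  proof -
    have "t * (\<Sum>a<n. w a * x $ a)\<^sup>2 = t * (\<Sum>a<n. \<Sum>b<n. (w a * x $ a) * (w b * x $ b))"
      by (simp only: power2_eq_square sum_product)
    thus ?thesis by (simp only: sum_distrib_left mult.assoc)
  qed
  finally show ?thesis .
qed

lemma rank_one_update_eigenvalues:
  fixes C M :: "real mat"
  assumes decC: "orthogonal_eigen_decomp n C U cs" "sorted (rev cs)"
    and decM: "orthogonal_eigen_decomp n M W ms" "sorted (rev ms)"
    and update: "\<And>a b. a < n \<Longrightarrow> b < n \<Longrightarrow> M $$ (a,b) = C $$ (a,b) + t * w a * w b"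
    and t: "0 \<le> t"
  shows "\<forall>k<n. cs ! k \<le> ms ! k" and "(\<Sum>k<n. ms ! k - cs ! k) = t * (\<Sum>a<n. (w a)\<^sup>2)"
proof -
  have "x \<bullet> (C *\<^sub>v x) \<le> x \<bullet> (M *\<^sub>v x)" if "x \<in> carrier_vec n" for x
    using quadratic_form_rank_one_update[OF orthogonal_eigen_decompD(6)[OF decC(1)]
        orthogonal_eigen_decompD(6)[OF decM(1)] update that] t
    by simp
  thus "\<forall>k<n. cs ! k \<le> ms ! k" using eigenvalues_mono[OF decC decM] by blast
  have "(\<Sum>k<n. ms ! k - cs ! k) = (\<Sum>i<n. M $$ (i,i)) - (\<Sum>i<n. C $$ (i,i))"
    using trace_orthogonal_eigen_decomp[OF decM(1)] trace_orthogonal_eigen_decomp[OF decC(1)]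
    by (simp add: sum_subtractf)
  also have "\<dots> = t * (\<Sum>a<n. (w a)\<^sup>2)"
    by (simp add: update sum.distrib sum_distrib_left power2_eq_square mult.assoc)
  finally show "(\<Sum>k<n. ms ! k - cs ! k) = t * (\<Sum>a<n. (w a)\<^sup>2)" .
qed

section \<open>Empirical covariance matrices\<close>

text \<open>Zeroing a column rather than deleting it keeps the normalisation \<open>1/n\<close> of \<open>emp_cov\<close>.\<close>
definition erase_col :: "nat \<Rightarrow> 'a :: zero mat \<Rightarrow> 'a mat" where
  "erase_col j0 X = mat (dim_row X) (dim_col X) (\<lambda>(i,j). if j = j0 then 0 else X $$ (i,j))"

lemma emp_cov_index:
  assumes "X \<in> carrier_mat d n" "a < d" "b < d"
  shows "emp_cov X $$ (a,b) = (1 / real n) * (\<Sum>j<n. X $$ (a,j) * X $$ (b,j))"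
  using assms by (simp add: emp_cov_def scalar_prod_def atLeast0LessThan)

lemma emp_cov_symmetric:
  assumes X: "X \<in> carrier_mat d n"
  shows "emp_cov X \<in> carrier_mat d d" "transpose_mat (emp_cov X) = emp_cov X"
proof -
  show C: "emp_cov X \<in> carrier_mat d d" using X by (simp add: emp_cov_def)
  show "transpose_mat (emp_cov X) = emp_cov X"
    by (rule eq_matI, insert C, auto simp: emp_cov_index[OF X] mult.commute)
qed

lemma emp_cov_erase_col:
  assumes X: "X \<in> carrier_mat d n" and j0: "j0 < n" and ab: "a < d" "b < d"
  shows "emp_cov X $$ (a,b)
    = emp_cov (erase_col j0 X) $$ (a,b) + (1 / real n) * X $$ (a,j0) * X $$ (b,j0)"
proof -
  have X': "erase_col j0 X \<in> carrier_mat d n" using X unfolding erase_col_def by simp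
  have "(\<Sum>j<n. X $$ (a,j) * X $$ (b,j))
      = X $$ (a,j0) * X $$ (b,j0) + (\<Sum>j\<in>{..<n} - {j0}. X $$ (a,j) * X $$ (b,j))"
    using j0 by (subst sum.remove[of _ j0], auto)
  moreover have "(\<Sum>j<n. erase_col j0 X $$ (a,j) * erase_col j0 X $$ (b,j))
      = (\<Sum>j\<in>{..<n} - {j0}. X $$ (a,j) * X $$ (b,j))"
    using j0 X ab by (subst sum.remove[of _ j0], auto simp: erase_col_def intro!: sum.cong)
  ultimately show ?thesis
    unfolding emp_cov_index[OF X ab] emp_cov_index[OF X' ab] by (simp add: algebra_simps)
qed

lemma neighbors_erase_col:
  assumes "neighbors X X'" and X: "X \<in> carrier_mat d n" and X': "X' \<in> carrier_mat d n"
  obtains j0 where "j0 < n" "erase_col j0 X = erase_col j0 X'"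
proof -
  have "card {j. j < n \<and> col X j \<noteq> col X' j} = 1"
    using assms(1) X unfolding neighbors_def by auto
  then obtain j0 where j0: "{j. j < n \<and> col X j \<noteq> col X' j} = {j0}"
    by (rule card_1_singletonE)
  have "X $$ (i,j) = X' $$ (i,j)" if "i < d" "j < n" "j \<noteq> j0" for i j
  proof -
    have "col X j = col X' j" using j0 that by auto
    hence "col X j $ i = col X' j $ i" by simp
    thus ?thesis using that X X' by simp
  qed
  hence "erase_col j0 X = erase_col j0 X'"
    using X X' by (auto simp: erase_col_def intro!: eq_matI)
  thus thesis using that j0 by auto
qed

lemma eigenvalues_emp_cov_erase_col:
  fixes X :: "real mat"
  assumes X: "X \<in> carrier_mat d n" and j0: "j0 < n" and ball: "in_unit_ball_cols X"
  defines "\<mu> \<equiv> eigenvalues_desc (emp_cov X)"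
    and "c \<equiv> eigenvalues_desc (emp_cov (erase_col j0 X))"
  shows "\<forall>k<d. c ! k \<le> \<mu> ! k" and "(\<Sum>k<d. \<mu> ! k - c ! k) \<le> 1 / real n"
proof -
  have X': "erase_col j0 X \<in> carrier_mat d n" using X unfolding erase_col_def by simp
  obtain U cs where decC: "orthogonal_eigen_decomp d (emp_cov (erase_col j0 X)) U cs"
    "sorted (rev cs)"
    using real_symmetric_sorted_eigen_decomp[OF emp_cov_symmetric[OF X']] by blast
  obtain W ms where decM: "orthogonal_eigen_decomp d (emp_cov X) W ms" "sorted (rev ms)"
    using real_symmetric_sorted_eigen_decomp[OF emp_cov_symmetric[OF X]] by blast
  have update: "\<And>a b. a < d \<Longrightarrow> b < d \<Longrightarrow> emp_cov X $$ (a,b)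
      = emp_cov (erase_col j0 X) $$ (a,b) + (1 / real n) * X $$ (a,j0) * X $$ (b,j0)"
    by (rule emp_cov_erase_col[OF X j0])
  have "c = cs" "\<mu> = ms"
    unfolding c_def \<mu>_def using eigenvalues_desc_orthogonal_eigen_decomp decC decM by auto
  moreover note rank_one_update_eigenvalues[OF decC decM update]
  moreover have "(\<Sum>a<d. (X $$ (a,j0))\<^sup>2) \<le> 1" using ball j0 X unfolding in_unit_ball_cols_def by auto
  ultimately show "\<forall>k<d. c ! k \<le> \<mu> ! k" "(\<Sum>k<d. \<mu> ! k - c ! k) \<le> 1 / real n"
    by (auto intro: divide_right_mono)
qed

section \<open>The perturbation bound\<close>

lemma sum_squares_le_square_sum:
  fixes f :: "nat \<Rightarrow> real"
  assumes "\<And>k. k < d \<Longrightarrow> 0 \<le> f k"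
  shows "(\<Sum>k<d. (f k)\<^sup>2) \<le> (\<Sum>k<d. f k)\<^sup>2"
proof -
  have "(\<Sum>k<d. (f k)\<^sup>2) \<le> (\<Sum>k<d. f k * (\<Sum>k<d. f k))"
  proof (rule sum_mono)
    fix k assume k: "k \<in> {..<d}"
    have "f k \<le> (\<Sum>k<d. f k)" by (rule member_le_sum, insert k assms, auto)
    thus "(f k)\<^sup>2 \<le> f k * (\<Sum>k<d. f k)" using assms[of k] k by (simp add: power2_eq_square mult_left_mono)
  qed
  thus ?thesis by (simp add: sum_distrib_right power2_eq_square)
qed

lemma sum_squared_diff_le:
  fixes p q :: "nat \<Rightarrow> real"
  assumes p: "\<And>k. k < d \<Longrightarrow> 0 \<le> p k" and q: "\<And>k. k < d \<Longrightarrow> 0 \<le> q k"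
    and sum_p: "(\<Sum>k<d. p k) \<le> r" and sum_q: "(\<Sum>k<d. q k) \<le> r"
  shows "(\<Sum>k<d. (p k - q k)\<^sup>2) \<le> 2 * r\<^sup>2"
proof -
  have "(\<Sum>k<d. (p k - q k)\<^sup>2) \<le> (\<Sum>k<d. (p k)\<^sup>2) + (\<Sum>k<d. (q k)\<^sup>2)"
    unfolding sum.distrib[symmetric] using p q
    by (intro sum_mono) (simp add: power2_diff)
  also have "\<dots> \<le> (\<Sum>k<d. p k)\<^sup>2 + (\<Sum>k<d. q k)\<^sup>2"
    using sum_squares_le_square_sum[where f = p and d = d, OF p]
      sum_squares_le_square_sum[where f = q and d = d, OF q] by simp
  also have "\<dots> \<le> r\<^sup>2 + r\<^sup>2"
    using p q sum_p sum_q by (intro add_mono power_mono) (auto intro: sum_nonneg)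
  finally show ?thesis by simp
qed

theorem mainTheorem1:
  fixes X X' :: "real mat" and d n :: nat
  assumes "d \<ge> 1" and "n \<ge> 1"
    and "X \<in> carrier_mat d n" and "X' \<in> carrier_mat d n"
    and "neighbors X X'"
    and "in_unit_ball_cols X" and "in_unit_ball_cols X'"
  shows "sqrt (\<Sum>i < d. (eigenvalues_desc (emp_cov X) ! i - eigenvalues_desc (emp_cov X') ! i)\<^sup>2)
           \<le> sqrt 2 / real n"
proof -
  obtain j0 where j0: "j0 < n" and erase: "erase_col j0 X = erase_col j0 X'"
    using neighbors_erase_col[OF assms(5,3,4)] .
  define \<mu> where "\<mu> = eigenvalues_desc (emp_cov X)"
  define \<nu> where "\<nu> = eigenvalues_desc (emp_cov X')"
  define c where "c = eigenvalues_desc (emp_cov (erase_col j0 X))"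
  note shift_X = eigenvalues_emp_cov_erase_col[OF assms(3) j0 assms(6), folded \<mu>_def c_def]
  note shift_X' = eigenvalues_emp_cov_erase_col[OF assms(4) j0 assms(7), folded \<nu>_def erase, folded c_def]
  have "(\<Sum>k<d. ((\<mu> ! k - c ! k) - (\<nu> ! k - c ! k))\<^sup>2) \<le> 2 * (1 / real n)\<^sup>2"
    using shift_X shift_X' by (intro sum_squared_diff_le) auto
  hence "(\<Sum>k<d. (\<mu> ! k - \<nu> ! k)\<^sup>2) \<le> 2 / (real n)\<^sup>2" by (simp add: power_divide)
  hence "sqrt (\<Sum>k<d. (\<mu> ! k - \<nu> ! k)\<^sup>2) \<le> sqrt (2 / (real n)\<^sup>2)" by (rule real_sqrt_le_mono)
  thus ?thesis unfolding \<mu>_def \<nu>_def by (simp add: real_sqrt_divide)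
qed

end
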